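(* Let $R$ be a local ring with maximal ideal $\mathcal{M}$ such that $\mathcal{M}$ is finitely generated both as a left ideal and as a right ideal. If every left $R$-module generated by two elements is a direct sum of cyclic modules, then either $\mathcal{M}$ is a principal left ideal or $\mathcal{M}$ is a principal right ideal.
   Context: All rings have identity and modules are unital. A ring $R$ is local if it has a unique maximal left ideal $\mathcal{M}$ (which is then the Jacobson radical and a two-sided ideal). *)

theory Defs
  imports "HOL-Algebra.Module" "HOL-Algebra.Ideal"
begin

text \<open>Left modules over a not necessarily commutative ring (the library locale
  module requires a commutative ring, so we state the axioms ourselves).\<close>

definition left_module :: "('a, 'c) ring_scheme \<Rightarrow> ('a, 'm, 'd) module_scheme \<Rightarrow> bool" where
  "left_module R M \<longleftrightarrow> ring R \<and> abelian_group M \<and>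
    (\<forall>a\<in>carrier R. \<forall>x\<in>carrier M. a \<odot>\<^bsub>M\<^esub> x \<in> carrier M) \<and>
    (\<forall>a\<in>carrier R. \<forall>b\<in>carrier R. \<forall>x\<in>carrier M.
        (a \<oplus>\<^bsub>R\<^esub> b) \<odot>\<^bsub>M\<^esub> x = a \<odot>\<^bsub>M\<^esub> x \<oplus>\<^bsub>M\<^esub> b \<odot>\<^bsub>M\<^esub> x) \<and>
    (\<forall>a\<in>carrier R. \<forall>x\<in>carrier M. \<forall>y\<in>carrier M.
        a \<odot>\<^bsub>M\<^esub> (x \<oplus>\<^bsub>M\<^esub> y) = a \<odot>\<^bsub>M\<^esub> x \<oplus>\<^bsub>M\<^esub> a \<odot>\<^bsub>M\<^esub> y) \<and>
    (\<forall>a\<in>carrier R. \<forall>b\<in>carrier R. \<forall>x\<in>carrier M.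
        (a \<otimes>\<^bsub>R\<^esub> b) \<odot>\<^bsub>M\<^esub> x = a \<odot>\<^bsub>M\<^esub> (b \<odot>\<^bsub>M\<^esub> x)) \<and>
    (\<forall>x\<in>carrier M. \<one>\<^bsub>R\<^esub> \<odot>\<^bsub>M\<^esub> x = x)"

definition left_ideal :: "('a, 'c) ring_scheme \<Rightarrow> 'a set \<Rightarrow> bool" where
  "left_ideal R I \<longleftrightarrow> additive_subgroup I R \<and>
     (\<forall>a\<in>carrier R. \<forall>x\<in>I. a \<otimes>\<^bsub>R\<^esub> x \<in> I)"

definition right_ideal :: "('a, 'c) ring_scheme \<Rightarrow> 'a set \<Rightarrow> bool" where
  "right_ideal R I \<longleftrightarrow> additive_subgroup I R \<and>
     (\<forall>a\<in>carrier R. \<forall>x\<in>I. x \<otimes>\<^bsub>R\<^esub> a \<in> I)"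

definition maximal_left_ideal :: "('a, 'c) ring_scheme \<Rightarrow> 'a set \<Rightarrow> bool" where
  "maximal_left_ideal R I \<longleftrightarrow> left_ideal R I \<and> I \<noteq> carrier R \<and>
     (\<forall>J. left_ideal R J \<and> I \<subseteq> J \<and> J \<noteq> carrier R \<longrightarrow> J = I)"

definition local_ring :: "('a, 'c) ring_scheme \<Rightarrow> bool" where
  "local_ring R \<longleftrightarrow> ring R \<and> (\<exists>!I. maximal_left_ideal R I)"

definition left_ideal_gen :: "('a, 'c) ring_scheme \<Rightarrow> 'a set \<Rightarrow> 'a set" where
  "left_ideal_gen R S = {finsum R (\<lambda>s. f s \<otimes>\<^bsub>R\<^esub> s) S | f. f \<in> S \<rightarrow> carrier R}"

definition right_ideal_gen :: "('a, 'c) ring_scheme \<Rightarrow> 'a set \<Rightarrow> 'a set" where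
  "right_ideal_gen R S = {finsum R (\<lambda>s. s \<otimes>\<^bsub>R\<^esub> f s) S | f. f \<in> S \<rightarrow> carrier R}"

definition fg_left_ideal :: "('a, 'c) ring_scheme \<Rightarrow> 'a set \<Rightarrow> bool" where
  "fg_left_ideal R I \<longleftrightarrow> left_ideal R I \<and>
     (\<exists>S. finite S \<and> S \<subseteq> carrier R \<and> I = left_ideal_gen R S)"

definition fg_right_ideal :: "('a, 'c) ring_scheme \<Rightarrow> 'a set \<Rightarrow> bool" where
  "fg_right_ideal R I \<longleftrightarrow> right_ideal R I \<and>
     (\<exists>S. finite S \<and> S \<subseteq> carrier R \<and> I = right_ideal_gen R S)"

definition principal_left_ideal :: "('a, 'c) ring_scheme \<Rightarrow> 'a set \<Rightarrow> bool" where
  "principal_left_ideal R I \<longleftrightarrow> (\<exists>a\<in>carrier R. I = {r \<otimes>\<^bsub>R\<^esub> a | r. r \<in> carrier R})"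

definition principal_right_ideal :: "('a, 'c) ring_scheme \<Rightarrow> 'a set \<Rightarrow> bool" where
  "principal_right_ideal R I \<longleftrightarrow> (\<exists>a\<in>carrier R. I = {a \<otimes>\<^bsub>R\<^esub> r | r. r \<in> carrier R})"

definition two_generated :: "('a, 'c) ring_scheme \<Rightarrow> ('a, 'm, 'd) module_scheme \<Rightarrow> bool" where
  "two_generated R M \<longleftrightarrow> (\<exists>x\<in>carrier M. \<exists>y\<in>carrier M.
     carrier M = {a \<odot>\<^bsub>M\<^esub> x \<oplus>\<^bsub>M\<^esub> b \<odot>\<^bsub>M\<^esub> y | a b. a \<in> carrier R \<and> b \<in> carrier R})"

text \<open>M is a direct sum of cyclic modules: M is the internal direct sum of finitely
  many cyclic submodules R x_0, ..., R x_(n-1).  (A finitely generated module that is a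
  direct sum of modules has only finitely many nonzero summands, so finitely many
  summands is no restriction.)\<close>

definition direct_sum_of_cyclics :: "('a, 'c) ring_scheme \<Rightarrow> ('a, 'm, 'd) module_scheme \<Rightarrow> bool" where
  "direct_sum_of_cyclics R M \<longleftrightarrow> (\<exists>(n::nat) (x::nat \<Rightarrow> 'm).
     (\<forall>i<n. x i \<in> carrier M) \<and>
     (\<forall>m\<in>carrier M. \<exists>a. (\<forall>i<n. a i \<in> carrier R) \<and>
         m = finsum M (\<lambda>i. a i \<odot>\<^bsub>M\<^esub> x i) {..<n}) \<and>
     (\<forall>a. (\<forall>i<n. a i \<in> carrier R) \<and> finsum M (\<lambda>i. a i \<odot>\<^bsub>M\<^esub> x i) {..<n} = \<zero>\<^bsub>M\<^esub>
         \<longrightarrow> (\<forall>i<n. a i \<odot>\<^bsub>M\<^esub> x i = \<zero>\<^bsub>M\<^esub>)))"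

end

theory Submission
  imports Defs "HOL-Algebra.Divisibility"
begin

text \<open>For \<open>a, b\<close> in the maximal ideal \<open>Max\<close> consider the two-generated module
  \<open>Q = R\<^sup>2 / R(a, b)\<close>. If \<open>Q\<close> is a direct sum of cyclic modules, some cyclic summand is
  generated by the class of a pair \<open>(u, v)\<close> with \<open>u\<close> a unit, since the class of \<open>(1, 0)\<close> is
  not a combination of classes with first coordinate in \<open>Max\<close>. Comparing the coordinates of
  the classes of \<open>(1, 0)\<close> and \<open>(0, 1)\<close> on this summand yields \<open>d\<close> with \<open>d(u, v) \<in> R(a, b)\<close>,
  and a case distinction on which of the coefficients involved are units gives
  \<open>a \<in> bR\<close> or \<open>b \<in> aR\<close>. So \<open>Max\<close> is a chain under right divisibility, and a finitely
  generated right ideal with this property is generated by its least generator.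
  The argument always produces a principal right ideal.\<close>

lemma (in ring) left_ideal_eq_carrier_if_one_mem:
  assumes "left_ideal R J" "\<one> \<in> J"
  shows "J = carrier R"
proof
  show "J \<subseteq> carrier R"
    using assms(1) additive_subgroup.a_subset unfolding left_ideal_def by blast
  show "carrier R \<subseteq> J"
  proof
    fix x assume "x \<in> carrier R"
    then have "x \<otimes> \<one> \<in> J"
      using assms unfolding left_ideal_def by blast
    then show "x \<in> J"
      using \<open>x \<in> carrier R\<close> by simp
  qed
qed

lemma (in ring) left_ideal_Union_chain:
  assumes "C \<noteq> {}" "\<forall>I\<in>C. left_ideal R I" "chain\<^sub>\<subseteq> C"
  shows "left_ideal R (\<Union>C)"
proof -
  have sub: "\<And>I. I \<in> C \<Longrightarrow> additive_subgroup I R"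
    using assms(2) by (simp add: left_ideal_def)
  have common: "\<exists>I\<in>C. x \<in> I \<and> y \<in> I" if "x \<in> \<Union>C" "y \<in> \<Union>C" for x y
    using that assms(3) unfolding chain_subset_def by blast
  have "additive_subgroup (\<Union>C) R"
  proof (intro additive_subgroupI subgroup.intro)
    show "\<Union>C \<subseteq> carrier (add_monoid R)"
      using sub additive_subgroup.a_subset by auto
    obtain I where "I \<in> C" using assms(1) by blast
    then have "\<zero> \<in> I"
      using additive_subgroup.zero_closed[OF sub] by blast
    then show "\<one>\<^bsub>add_monoid R\<^esub> \<in> \<Union>C"
      using \<open>I \<in> C\<close> by auto
  next
    fix x y assume "x \<in> \<Union>C" "y \<in> \<Union>C"
    then obtain I where I: "I \<in> C" "x \<in> I" "y \<in> I"
      using common by meson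
    then have "x \<oplus> y \<in> I"
      using additive_subgroup.a_closed[OF sub] by blast
    then show "x \<otimes>\<^bsub>add_monoid R\<^esub> y \<in> \<Union>C"
      using I by auto
  next
    fix x assume "x \<in> \<Union>C"
    then obtain I where I: "I \<in> C" "x \<in> I" by blast
    then have "\<ominus> x \<in> I"
      using additive_subgroup.a_inv_closed[OF sub] by blast
    then show "inv\<^bsub>add_monoid R\<^esub> x \<in> \<Union>C"
      using I by (auto simp: a_inv_def)
  qed
  then show ?thesis
    using assms(2) unfolding left_ideal_def by blast
qed

locale left_local_ring = ring R for R (structure) +
  fixes Max
  assumes maximal_left_ideal_Max: "maximal_left_ideal R Max"
    and maximal_left_ideal_unique: "maximal_left_ideal R I \<Longrightarrow> I = Max"

lemma local_ring_imp_left_local_ring: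
  fixes Max :: "'a set"
  assumes "local_ring R" "maximal_left_ideal R Max"
  shows "left_local_ring R Max"
  using assms unfolding local_ring_def left_local_ring_def left_local_ring_axioms_def by blast

context left_local_ring
begin

lemma left_ideal_Max: "left_ideal R Max"
  using maximal_left_ideal_Max by (simp add: maximal_left_ideal_def)

lemma additive_subgroup_Max: "additive_subgroup Max R"
  using left_ideal_Max by (simp add: left_ideal_def)

lemma Max_carrier: "x \<in> Max \<Longrightarrow> x \<in> carrier R"
  using additive_subgroup.a_subset[OF additive_subgroup_Max] by blast

lemma Max_zero: "\<zero> \<in> Max"
  by (rule additive_subgroup.zero_closed[OF additive_subgroup_Max])

lemma Max_add: "x \<in> Max \<Longrightarrow> y \<in> Max \<Longrightarrow> x \<oplus> y \<in> Max"
  by (rule additive_subgroup.a_closed[OF additive_subgroup_Max])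

lemma Max_neg: "x \<in> Max \<Longrightarrow> \<ominus> x \<in> Max"
  by (rule additive_subgroup.a_inv_closed[OF additive_subgroup_Max])

lemma Max_lmult: "a \<in> carrier R \<Longrightarrow> x \<in> Max \<Longrightarrow> a \<otimes> x \<in> Max"
  using left_ideal_Max by (simp add: left_ideal_def)

lemma one_notin_Max: "\<one> \<notin> Max"
  using maximal_left_ideal_Max left_ideal_eq_carrier_if_one_mem left_ideal_Max
  by (auto simp: maximal_left_ideal_def)

lemma left_ideal_subset_Max:
  assumes "left_ideal R J" "\<one> \<notin> J"
  shows "J \<subseteq> Max"
proof -
  let ?A = "{I. left_ideal R I \<and> J \<subseteq> I \<and> \<one> \<notin> I}"
  have "\<exists>U\<in>?A. \<forall>X\<in>C. X \<subseteq> U" if "C \<in> chains ?A" for C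
  proof (cases "C = {}")
    case True
    then show ?thesis using assms by blast
  next
    case False
    have C: "C \<subseteq> ?A" "chain\<^sub>\<subseteq> C"
      using that by (auto simp: chains_def)
    then have "left_ideal R (\<Union>C)"
      using left_ideal_Union_chain[OF False] by blast
    moreover have "J \<subseteq> \<Union>C" "\<one> \<notin> \<Union>C"
      using False C(1) by blast+
    ultimately show ?thesis by blast
  qed
  then obtain M where M: "M \<in> ?A" and M_max: "\<forall>X\<in>?A. M \<subseteq> X \<longrightarrow> X = M"
    using Zorn_Lemma2[of ?A] by blast
  have "maximal_left_ideal R M"
    unfolding maximal_left_ideal_def
  proof (intro conjI allI impI)
    fix K assume "left_ideal R K \<and> M \<subseteq> K \<and> K \<noteq> carrier R"
    then show "K = M"
      using M M_max left_ideal_eq_carrier_if_one_mem by blast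
  next
    show "left_ideal R M" using M by blast
    show "M \<noteq> carrier R" using M by blast
  qed
  then show ?thesis
    using M maximal_left_ideal_unique by blast
qed

lemma left_invertible_if_notin_Max:
  assumes x: "x \<in> carrier R" "x \<notin> Max"
  obtains y where "y \<in> carrier R" "y \<otimes> x = \<one>"
proof -
  let ?J = "{r \<otimes> x | r. r \<in> carrier R}"
  have "left_ideal R ?J"
    unfolding left_ideal_def
  proof (intro conjI ballI additive_subgroupI subgroup.intro)
    show "?J \<subseteq> carrier (add_monoid R)" using x by auto
  next
    show "\<one>\<^bsub>add_monoid R\<^esub> \<in> ?J" using x by (auto intro!: exI[of _ \<zero>])
  next
    fix p q assume "p \<in> ?J" "q \<in> ?J"
    then obtain r s where "r \<in> carrier R" "s \<in> carrier R" "p = r \<otimes> x" "q = s \<otimes> x"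
      by blast
    then show "p \<otimes>\<^bsub>add_monoid R\<^esub> q \<in> ?J"
      using x by (auto intro!: exI[of _ "r \<oplus> s"] simp: l_distr)
  next
    fix p assume "p \<in> ?J"
    then obtain r where "r \<in> carrier R" "p = r \<otimes> x" by blast
    then show "inv\<^bsub>add_monoid R\<^esub> p \<in> ?J"
      using x by (auto intro!: exI[of _ "\<ominus> r"] simp: l_minus a_inv_def[symmetric])
  next
    fix c p assume "c \<in> carrier R" "p \<in> ?J"
    then obtain r where "r \<in> carrier R" "p = r \<otimes> x" by blast
    then show "c \<otimes> p \<in> ?J"
      using x \<open>c \<in> carrier R\<close> by (auto intro!: exI[of _ "c \<otimes> r"] simp: m_assoc)
  qed
  moreover have "x \<in> ?J"
    using x by (auto intro!: exI[of _ \<one>])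
  ultimately have "\<one> \<in> ?J"
    using left_ideal_subset_Max x by blast
  then show ?thesis
    using that by auto
qed

lemma one_minus_notin_Max:
  assumes "p \<in> Max"
  shows "\<one> \<ominus> p \<notin> Max"
proof
  assume "\<one> \<ominus> p \<in> Max"
  then have "(\<one> \<ominus> p) \<oplus> p \<in> Max"
    using assms by (rule Max_add)
  moreover have "p \<in> carrier R"
    using assms by (rule Max_carrier)
  then have "(\<one> \<ominus> p) \<oplus> p = \<one>"
    by algebra
  ultimately show False
    using one_notin_Max by simp
qed

lemma Units_if_notin_Max:
  assumes x: "x \<in> carrier R" "x \<notin> Max"
  shows "x \<in> Units R"
proof -
  obtain y where y: "y \<in> carrier R" "y \<otimes> x = \<one>"
    using left_invertible_if_notin_Max[OF x] .
  have "y \<notin> Max"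
  proof
    assume "y \<in> Max"
    then have "x \<otimes> y \<in> Max"
      by (rule Max_lmult[OF x(1)])
    then have "\<one> \<ominus> x \<otimes> y \<notin> Max"
      by (rule one_minus_notin_Max)
    moreover have "\<one> \<ominus> x \<otimes> y \<in> carrier R"
      using x(1) y(1) by simp
    ultimately obtain g where g: "g \<in> carrier R" "g \<otimes> (\<one> \<ominus> x \<otimes> y) = \<one>"
      using left_invertible_if_notin_Max by metis
    have "(\<one> \<ominus> x \<otimes> y) \<otimes> x = x \<ominus> x \<otimes> (y \<otimes> x)"
      using x(1) y(1) by algebra
    then have "(\<one> \<ominus> x \<otimes> y) \<otimes> x = \<zero>"
      using x(1) y(2) by (simp add: minus_eq r_neg)
    have "x = (g \<otimes> (\<one> \<ominus> x \<otimes> y)) \<otimes> x"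
      using g(2) x(1) by simp
    also have "\<dots> = g \<otimes> ((\<one> \<ominus> x \<otimes> y) \<otimes> x)"
      using g(1) x(1) y(1) by (simp add: m_assoc)
    finally have "x = \<zero>"
      using \<open>(\<one> \<ominus> x \<otimes> y) \<otimes> x = \<zero>\<close> g(1) by simp
    then show False
      using x(2) Max_zero by simp
  qed
  then obtain z where z: "z \<in> carrier R" "z \<otimes> y = \<one>"
    using left_invertible_if_notin_Max y(1) by metis
  have "z = (z \<otimes> y) \<otimes> x"
    using x(1) y z(1) by (simp add: m_assoc)
  then have "z = x"
    using z(2) x(1) by simp
  then have "x \<otimes> y = \<one>"
    using z(2) by simp
  then show ?thesis
    using x(1) y unfolding Units_def by blast
qed

lemma one_minus_Units_if_in_Max:
  assumes "p \<in> Max"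
  shows "\<one> \<ominus> p \<in> Units R"
proof (rule Units_if_notin_Max)
  show "\<one> \<ominus> p \<in> carrier R"
    using assms Max_carrier by blast
  show "\<one> \<ominus> p \<notin> Max"
    using assms by (rule one_minus_notin_Max)
qed

lemma divides_dichotomy_if_relation:
  assumes carr: "a \<in> carrier R" "b \<in> carrier R" "p \<in> carrier R" "q \<in> carrier R"
    and rel: "a \<otimes> p = b \<otimes> q" and "p \<notin> Max \<or> q \<notin> Max"
  shows "b divides a \<or> a divides b"
  using assms(6)
proof
  assume "p \<notin> Max"
  then have p: "p \<in> Units R"
    using Units_if_notin_Max carr by blast
  have "a = (a \<otimes> p) \<otimes> inv p"
    using p carr by (simp add: m_assoc)
  then have "a = b \<otimes> (q \<otimes> inv p)"
    using p carr by (simp add: rel m_assoc)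
  then have "b divides a"
    using p carr by (intro dividesI) auto
  then show ?thesis ..
next
  assume "q \<notin> Max"
  then have q: "q \<in> Units R"
    using Units_if_notin_Max carr by blast
  have "b = (b \<otimes> q) \<otimes> inv q"
    using q carr by (simp add: m_assoc)
  then have "b = a \<otimes> (p \<otimes> inv q)"
    using q carr by (simp add: rel[symmetric] m_assoc)
  then have "a divides b"
    using q carr by (intro dividesI) auto
  then show ?thesis ..
qed

text \<open>If \<open>r\<close> is a unit, then \<open>b = aw\<close>. Otherwise \<open>1 - r\<close> is a unit, which forces \<open>ra = 0\<close>,
  and the resulting relation \<open>a(1 - wz) = b(-z)\<close> has a coefficient outside \<open>Max\<close>.\<close>

lemma divides_dichotomy:
  assumes carr: "a \<in> carrier R" "b \<in> carrier R" "r \<in> carrier R" "w \<in> carrier R" "z \<in> carrier R"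
    and ra: "r \<otimes> a = a \<oplus> (b \<ominus> a \<otimes> w) \<otimes> z"
    and raw: "r \<otimes> a \<otimes> w = r \<otimes> b"
  shows "b divides a \<or> a divides b"
proof (cases "r \<in> Max")
  case False
  then have "r \<in> Units R"
    using Units_if_notin_Max carr by blast
  then have "b = a \<otimes> w"
    using raw carr by (simp add: m_assoc)
  then have "a divides b"
    using carr by (intro dividesI)
  then show ?thesis ..
next
  case True
  have "r \<otimes> (b \<ominus> a \<otimes> w) = \<zero>"
    using carr raw by (simp add: r_distr minus_eq r_minus m_assoc r_neg)
  then have "r \<otimes> (r \<otimes> a) = r \<otimes> a"
    using carr by (simp add: ra r_distr flip: m_assoc)
  then have "(\<one> \<ominus> r) \<otimes> (r \<otimes> a) = (\<one> \<ominus> r) \<otimes> \<zero>"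
    using carr by (simp add: l_distr minus_eq l_minus r_neg)
  then have "r \<otimes> a = \<zero>"
    using Units_l_cancel[OF one_minus_Units_if_in_Max[OF True], of "r \<otimes> a" \<zero>] carr by simp
  then have "a \<oplus> (b \<ominus> a \<otimes> w) \<otimes> z = \<zero>"
    using ra by simp
  have "a \<otimes> (\<one> \<ominus> w \<otimes> z) = (a \<oplus> (b \<ominus> a \<otimes> w) \<otimes> z) \<oplus> b \<otimes> (\<ominus> z)"
    using carr by (simp add: r_distr l_distr minus_eq r_minus l_minus m_assoc a_ac r_neg2)
  also have "\<dots> = b \<otimes> (\<ominus> z)"
    unfolding \<open>a \<oplus> (b \<ominus> a \<otimes> w) \<otimes> z = \<zero>\<close> using carr by simp
  finally have "a \<otimes> (\<one> \<ominus> w \<otimes> z) = b \<otimes> (\<ominus> z)" .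
  moreover have "\<one> \<ominus> w \<otimes> z \<notin> Max \<or> \<ominus> z \<notin> Max"
  proof (cases "\<one> \<ominus> w \<otimes> z \<in> Max")
    case True
    then have "w \<otimes> z \<notin> Max"
      using one_minus_notin_Max by auto
    then have "z \<notin> Max"
      using Max_lmult carr by auto
    then have "\<ominus> z \<notin> Max"
      using Max_neg[of "\<ominus> z"] carr by auto
    then show ?thesis ..
  qed simp
  ultimately show ?thesis
    using carr by (intro divides_dichotomy_if_relation[of a b "\<one> \<ominus> w \<otimes> z" "\<ominus> z"]) auto
qed

end

lemma (in monoid) finite_divides_chain_least:
  assumes "finite T" "T \<noteq> {}" "T \<subseteq> carrier G"
    and chain: "\<forall>x\<in>T. \<forall>y\<in>T. x divides y \<or> y divides x"
  shows "\<exists>m\<in>T. \<forall>s\<in>T. m divides s"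
  using assms(1-3) chain
proof (induction T rule: finite_ne_induct)
  case (singleton x)
  then show ?case by auto
next
  case (insert x F)
  then obtain m where m: "m \<in> F" "\<forall>s\<in>F. m divides s"
    by auto
  have "x divides m \<or> m divides x"
    using insert.prems(2) m(1) by auto
  then show ?case
  proof
    assume "x divides m"
    then have "\<forall>s\<in>insert x F. x divides s"
      using m(2) insert.prems(1) by (auto intro: divides_trans)
    then show ?thesis by blast
  next
    assume "m divides x"
    then show ?thesis
      using m by auto
  qed
qed

lemma (in ring) right_ideal_gen_mult_mem:
  assumes "finite S" "S \<subseteq> carrier R" "s \<in> S" "r \<in> carrier R"
  shows "s \<otimes> r \<in> right_ideal_gen R S"
proof -
  let ?f = "\<lambda>t. if t = s then r else \<zero>"
  have "finsum R (\<lambda>t. t \<otimes> ?f t) S = finsum R (\<lambda>t. if t = s then s \<otimes> r else \<zero>) S"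
    using assms by (intro finsum_cong) (auto simp: subset_iff simp_implies_def)
  also have "\<dots> = s \<otimes> r"
    using assms by (intro add.finprod_singleton_swap) auto
  finally show ?thesis
    unfolding right_ideal_gen_def using assms(4)
    by (intro CollectI exI[of _ ?f]) auto
qed

lemma (in ring) right_ideal_gen_empty: "right_ideal_gen R {} = {\<zero> \<otimes> r | r. r \<in> carrier R}"
proof -
  have "right_ideal_gen R {} = {\<zero>}"
    unfolding right_ideal_gen_def by (auto intro: exI[of _ "\<lambda>_. \<zero>"])
  also have "\<dots> = {\<zero> \<otimes> r | r. r \<in> carrier R}"
  proof (intro equalityI subsetI)
    fix y assume "y \<in> {\<zero>}"
    then have "y = \<zero> \<otimes> \<zero>" by simp
    then show "y \<in> {\<zero> \<otimes> r | r. r \<in> carrier R}" by blast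
  qed auto
  finally show ?thesis .
qed

lemma (in ring) right_ideal_gen_subset_if_divides_all:
  assumes S: "finite S" and m: "m \<in> carrier R" "\<forall>s\<in>S. m divides s"
  shows "right_ideal_gen R S \<subseteq> {m \<otimes> r | r. r \<in> carrier R}"
proof
  obtain g where g: "\<forall>s\<in>S. g s \<in> carrier R \<and> s = m \<otimes> g s"
    using m(2) unfolding factor_def by metis
  fix y assume "y \<in> right_ideal_gen R S"
  then obtain f where f: "f \<in> S \<rightarrow> carrier R" "y = finsum R (\<lambda>s. s \<otimes> f s) S"
    unfolding right_ideal_gen_def by blast
  have gf: "(\<lambda>s. g s \<otimes> f s) \<in> S \<rightarrow> carrier R"
    using g f(1) by auto
  have "y = finsum R (\<lambda>s. m \<otimes> (g s \<otimes> f s)) S"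
    unfolding f(2)
  proof (rule finsum_cong')
    show "(\<lambda>s. m \<otimes> (g s \<otimes> f s)) \<in> S \<rightarrow> carrier R"
      using gf m(1) by auto
    fix s assume "s \<in> S"
    then have "s = m \<otimes> g s" "g s \<in> carrier R" "f s \<in> carrier R"
      using g f(1) by auto
    then show "s \<otimes> f s = m \<otimes> (g s \<otimes> f s)"
      using m(1) by (metis m_assoc)
  qed simp
  also have "\<dots> = m \<otimes> finsum R (\<lambda>s. g s \<otimes> f s) S"
    using finsum_rdistr[OF S m(1) gf] by simp
  finally have "y = m \<otimes> finsum R (\<lambda>s. g s \<otimes> f s) S" .
  moreover have "finsum R (\<lambda>s. g s \<otimes> f s) S \<in> carrier R"
    using gf by (rule finsum_closed)
  ultimately show "y \<in> {m \<otimes> r | r. r \<in> carrier R}"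
    by blast
qed

lemma (in ring) right_ideal_gen_principal_if_divides_chain:
  assumes S: "finite S" "S \<subseteq> carrier R"
    and chain: "\<forall>x\<in>S. \<forall>y\<in>S. x divides y \<or> y divides x"
  shows "principal_right_ideal R (right_ideal_gen R S)"
proof (cases "S = {}")
  case True
  with zero_closed right_ideal_gen_empty show ?thesis
    unfolding principal_right_ideal_def by blast
next
  case False
  then obtain m where m: "m \<in> S" "\<forall>s\<in>S. m divides s"
    using finite_divides_chain_least[OF S(1) False S(2) chain] by blast
  then have mR: "m \<in> carrier R"
    using S by auto
  have "right_ideal_gen R S \<subseteq> {m \<otimes> r | r. r \<in> carrier R}"
    using S(1) mR m(2) by (rule right_ideal_gen_subset_if_divides_all)
  moreover have "{m \<otimes> r | r. r \<in> carrier R} \<subseteq> right_ideal_gen R S"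
    using right_ideal_gen_mult_mem S m(1) by blast
  ultimately have "right_ideal_gen R S = {m \<otimes> r | r. r \<in> carrier R}"
    by (rule subset_antisym)
  with mR show ?thesis
    unfolding principal_right_ideal_def by (rule bexI[rotated])
qed

lemma (in ring) principal_right_ideal_if_divides_chain:
  assumes "fg_right_ideal R I" and chain: "\<And>x y. x \<in> I \<Longrightarrow> y \<in> I \<Longrightarrow> x divides y \<or> y divides x"
  shows "principal_right_ideal R I"
proof -
  obtain S where S: "finite S" "S \<subseteq> carrier R" "I = right_ideal_gen R S"
    using assms(1) unfolding fg_right_ideal_def by blast
  have "S \<subseteq> I"
  proof
    fix s assume "s \<in> S"
    then have "s \<otimes> \<one> \<in> right_ideal_gen R S"
      using S(1,2) by (intro right_ideal_gen_mult_mem) auto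
    then show "s \<in> I"
      using S(2,3) \<open>s \<in> S\<close> by auto
  qed
  then have "\<forall>x\<in>S. \<forall>y\<in>S. x divides y \<or> y divides x"
    using chain by (meson subsetD)
  then show ?thesis
    using right_ideal_gen_principal_if_divides_chain[OF S(1,2)] S(3) by simp
qed

locale left_mod = R?: ring + M?: abelian_group M for M (structure) +
  assumes smult_closed [simp, intro]:
      "\<lbrakk>a \<in> carrier R; x \<in> carrier M\<rbrakk> \<Longrightarrow> a \<odot>\<^bsub>M\<^esub> x \<in> carrier M"
    and smult_l_distr:
      "\<lbrakk>a \<in> carrier R; b \<in> carrier R; x \<in> carrier M\<rbrakk> \<Longrightarrow>
       (a \<oplus> b) \<odot>\<^bsub>M\<^esub> x = a \<odot>\<^bsub>M\<^esub> x \<oplus>\<^bsub>M\<^esub> b \<odot>\<^bsub>M\<^esub> x"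
    and smult_r_distr:
      "\<lbrakk>a \<in> carrier R; x \<in> carrier M; y \<in> carrier M\<rbrakk> \<Longrightarrow>
       a \<odot>\<^bsub>M\<^esub> (x \<oplus>\<^bsub>M\<^esub> y) = a \<odot>\<^bsub>M\<^esub> x \<oplus>\<^bsub>M\<^esub> a \<odot>\<^bsub>M\<^esub> y"
    and smult_assoc1:
      "\<lbrakk>a \<in> carrier R; b \<in> carrier R; x \<in> carrier M\<rbrakk> \<Longrightarrow>
       (a \<otimes> b) \<odot>\<^bsub>M\<^esub> x = a \<odot>\<^bsub>M\<^esub> (b \<odot>\<^bsub>M\<^esub> x)"
    and smult_one [simp]: "x \<in> carrier M \<Longrightarrow> \<one> \<odot>\<^bsub>M\<^esub> x = x"

lemma left_module_iff_left_mod: "left_module R M \<longleftrightarrow> left_mod R M"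
  unfolding left_module_def left_mod_def left_mod_axioms_def by auto

abbreviation lincomb :: "('a, 'm, 'd) module_scheme \<Rightarrow> (nat \<Rightarrow> 'a) \<Rightarrow> (nat \<Rightarrow> 'm) \<Rightarrow> nat \<Rightarrow> 'm"
  where "lincomb M c x n \<equiv> finsum M (\<lambda>i. c i \<odot>\<^bsub>M\<^esub> x i) {..<n}"

context left_mod
begin

lemma smult_l_null [simp]: "x \<in> carrier M \<Longrightarrow> \<zero> \<odot>\<^bsub>M\<^esub> x = \<zero>\<^bsub>M\<^esub>"
  using smult_l_distr[of \<zero> \<zero> x] by (simp add: M.add.r_cancel_one')

lemma smult_r_null [simp]: "a \<in> carrier R \<Longrightarrow> a \<odot>\<^bsub>M\<^esub> \<zero>\<^bsub>M\<^esub> = \<zero>\<^bsub>M\<^esub>"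
  using smult_l_null[of "\<zero>\<^bsub>M\<^esub>"] smult_assoc1[of a \<zero> "\<zero>\<^bsub>M\<^esub>"] by simp

lemma smult_finsum:
  assumes "finite A" "r \<in> carrier R" "f \<in> A \<rightarrow> carrier M"
  shows "r \<odot>\<^bsub>M\<^esub> finsum M f A = finsum M (\<lambda>i. r \<odot>\<^bsub>M\<^esub> f i) A"
  using assms by (induction A rule: finite_induct) (auto simp: Pi_def smult_r_distr)

lemma lincomb_closed:
  "\<forall>i<n. c i \<in> carrier R \<Longrightarrow> \<forall>i<n. x i \<in> carrier M \<Longrightarrow> lincomb M c x n \<in> carrier M"
  by (intro M.finsum_closed) auto

lemma smult_lincomb:
  assumes "r \<in> carrier R" "\<forall>i<n. c i \<in> carrier R" "\<forall>i<n. x i \<in> carrier M"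
  shows "r \<odot>\<^bsub>M\<^esub> lincomb M c x n = lincomb M (\<lambda>i. r \<otimes> c i) x n"
proof -
  have "r \<odot>\<^bsub>M\<^esub> lincomb M c x n = finsum M (\<lambda>i. r \<odot>\<^bsub>M\<^esub> (c i \<odot>\<^bsub>M\<^esub> x i)) {..<n}"
    using assms by (intro smult_finsum) auto
  also have "\<dots> = lincomb M (\<lambda>i. r \<otimes> c i) x n"
    using assms by (intro M.finsum_cong') (auto simp: smult_assoc1)
  finally show ?thesis .
qed

lemma lincomb_add:
  assumes "\<forall>i<n. c i \<in> carrier R" "\<forall>i<n. d i \<in> carrier R" "\<forall>i<n. x i \<in> carrier M"
  shows "lincomb M c x n \<oplus>\<^bsub>M\<^esub> lincomb M d x n = lincomb M (\<lambda>i. c i \<oplus> d i) x n"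
proof -
  have "lincomb M c x n \<oplus>\<^bsub>M\<^esub> lincomb M d x n
      = finsum M (\<lambda>i. c i \<odot>\<^bsub>M\<^esub> x i \<oplus>\<^bsub>M\<^esub> d i \<odot>\<^bsub>M\<^esub> x i) {..<n}"
    using assms by (intro M.finsum_addf[symmetric]) auto
  also have "\<dots> = lincomb M (\<lambda>i. c i \<oplus> d i) x n"
    using assms by (intro M.finsum_cong') (auto simp: smult_l_distr)
  finally show ?thesis .
qed

lemma lincomb_delta:
  assumes "i < n" "\<forall>j<n. x j \<in> carrier M"
  shows "lincomb M (\<lambda>j. if j = i then \<one> else \<zero>) x n = x i"
proof -
  have "lincomb M (\<lambda>j. if j = i then \<one> else \<zero>) x n
      = finsum M (\<lambda>j. if j = i then x j else \<zero>\<^bsub>M\<^esub>) {..<n}"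
    using assms(2) by (intro M.finsum_cong') auto
  also have "\<dots> = x i"
    using assms by (intro M.add.finprod_singleton_swap) auto
  finally show ?thesis .
qed

lemma lincomb_mem:
  assumes zero: "\<zero>\<^bsub>M\<^esub> \<in> N"
    and add: "\<And>y z. y \<in> N \<Longrightarrow> z \<in> N \<Longrightarrow> y \<oplus>\<^bsub>M\<^esub> z \<in> N"
    and smult: "\<And>r y. r \<in> carrier R \<Longrightarrow> y \<in> N \<Longrightarrow> r \<odot>\<^bsub>M\<^esub> y \<in> N"
    and "N \<subseteq> carrier M" "\<forall>i<n. c i \<in> carrier R" "\<forall>i<n. x i \<in> N"
  shows "lincomb M c x n \<in> N"
  using assms(5,6)
proof (induction n)
  case 0
  then show ?case using zero by simp
next
  case (Suc n)
  have "lincomb M c x (Suc n) = c n \<odot>\<^bsub>M\<^esub> x n \<oplus>\<^bsub>M\<^esub> lincomb M c x n"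
    using Suc.prems assms(4) by (subst lessThan_Suc, subst M.finsum_insert) (auto simp: Pi_def subset_iff)
  then show ?case
    using Suc add smult by simp
qed

lemma lincomb_linear:
  assumes "u \<in> carrier R" "v \<in> carrier R"
    and "\<forall>i<n. \<alpha> i \<in> carrier R" "\<forall>i<n. \<beta> i \<in> carrier R" "\<forall>i<n. x i \<in> carrier M"
  shows "u \<odot>\<^bsub>M\<^esub> lincomb M \<alpha> x n \<oplus>\<^bsub>M\<^esub> v \<odot>\<^bsub>M\<^esub> lincomb M \<beta> x n
    = lincomb M (\<lambda>i. u \<otimes> \<alpha> i \<oplus> v \<otimes> \<beta> i) x n"
  using assms by (simp add: smult_lincomb lincomb_add)

lemma smult_eq_zero_if_fixed:
  assumes "q \<in> carrier R" "y \<in> carrier M" "q \<odot>\<^bsub>M\<^esub> y = y"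
  shows "(\<one> \<ominus> q) \<odot>\<^bsub>M\<^esub> y = \<zero>\<^bsub>M\<^esub>"
proof -
  have "(\<one> \<ominus> q) \<odot>\<^bsub>M\<^esub> y \<oplus>\<^bsub>M\<^esub> y = ((\<one> \<ominus> q) \<oplus> q) \<odot>\<^bsub>M\<^esub> y"
    using assms by (simp add: smult_l_distr)
  also have "\<dots> = y"
    using assms by (simp add: R.minus_eq R.a_assoc R.l_neg)
  finally show ?thesis
    using M.add.r_cancel_one[OF assms(2) smult_closed[OF _ assms(2)]] assms(1) by simp
qed

end

locale cyclic_decomposition = left_mod +
  fixes n :: nat and x
  assumes generators_closed: "\<forall>i<n. x i \<in> carrier M"
    and spanning: "\<forall>m\<in>carrier M. \<exists>c. (\<forall>i<n. c i \<in> carrier R) \<and> m = lincomb M c x n"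
    and independent: "\<forall>c. (\<forall>i<n. c i \<in> carrier R) \<and> lincomb M c x n = \<zero>\<^bsub>M\<^esub>
         \<longrightarrow> (\<forall>i<n. c i \<odot>\<^bsub>M\<^esub> x i = \<zero>\<^bsub>M\<^esub>)"

lemma (in left_mod) direct_sum_of_cyclicsE:
  assumes "direct_sum_of_cyclics R M"
  obtains n x where "cyclic_decomposition R M n x"
proof -
  obtain n x where "cyclic_decomposition_axioms R M n x"
    using assms unfolding direct_sum_of_cyclics_def cyclic_decomposition_axioms_def by blast
  then have "cyclic_decomposition R M n x"
    by unfold_locales (simp_all add: cyclic_decomposition_axioms_def)
  then show thesis ..
qed

context cyclic_decomposition
begin

lemma summand_eq_if_lincomb_eq:
  assumes c: "\<forall>i<n. c i \<in> carrier R" and d: "\<forall>i<n. d i \<in> carrier R"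
    and eq: "lincomb M c x n = lincomb M d x n" and "i < n"
  shows "c i \<odot>\<^bsub>M\<^esub> x i = d i \<odot>\<^bsub>M\<^esub> x i"
proof -
  have cd: "\<forall>i<n. c i \<ominus> d i \<in> carrier R"
    using c d by auto
  have cancel: "(c j \<ominus> d j) \<oplus> d j = c j" if "j < n" for j
    using c d that by (simp add: R.minus_eq R.a_assoc R.l_neg)
  have "lincomb M (\<lambda>i. c i \<ominus> d i) x n \<oplus>\<^bsub>M\<^esub> lincomb M d x n = lincomb M (\<lambda>i. (c i \<ominus> d i) \<oplus> d i) x n"
    using cd d generators_closed by (rule lincomb_add)
  also have "\<dots> = lincomb M d x n"
    unfolding eq[symmetric] using c generators_closed
    by (intro M.finsum_cong') (auto simp: cancel)
  finally have "lincomb M (\<lambda>i. c i \<ominus> d i) x n = \<zero>\<^bsub>M\<^esub>"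
    using M.add.r_cancel_one[OF lincomb_closed[OF d generators_closed] lincomb_closed[OF cd generators_closed]]
    by simp
  then have "(c i \<ominus> d i) \<odot>\<^bsub>M\<^esub> x i = \<zero>\<^bsub>M\<^esub>"
    using independent[rule_format, of "\<lambda>i. c i \<ominus> d i"] cd \<open>i < n\<close> by simp
  then have "(c i \<ominus> d i) \<odot>\<^bsub>M\<^esub> x i \<oplus>\<^bsub>M\<^esub> d i \<odot>\<^bsub>M\<^esub> x i = d i \<odot>\<^bsub>M\<^esub> x i"
    using d generators_closed \<open>i < n\<close> by simp
  then show ?thesis
    using cd d generators_closed \<open>i < n\<close> by (simp add: cancel flip: smult_l_distr)
qed

lemma summand_eq_if_lincomb_eq_generator:
  assumes "\<forall>i<n. c i \<in> carrier R" "lincomb M c x n = x i" "i < n"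
  shows "c i \<odot>\<^bsub>M\<^esub> x i = x i"
proof -
  have "lincomb M c x n = lincomb M (\<lambda>j. if j = i then \<one> else \<zero>) x n"
    using assms lincomb_delta generators_closed by simp
  then have "c i \<odot>\<^bsub>M\<^esub> x i = (if i = i then \<one> else \<zero>) \<odot>\<^bsub>M\<^esub> x i"
    using assms by (intro summand_eq_if_lincomb_eq) auto
  then show ?thesis
    using generators_closed assms(3) by simp
qed

end

definition rel_coset :: "('a, 'c) ring_scheme \<Rightarrow> 'a \<Rightarrow> 'a \<Rightarrow> 'a \<Rightarrow> 'a \<Rightarrow> ('a \<times> 'a) set" where
  "rel_coset R a b u v = {(u \<oplus>\<^bsub>R\<^esub> t \<otimes>\<^bsub>R\<^esub> a, v \<oplus>\<^bsub>R\<^esub> t \<otimes>\<^bsub>R\<^esub> b) | t. t \<in> carrier R}"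

text \<open>\<open>R\<^sup>2 / R(a, b)\<close> as the set of cosets \<open>(u, v) + R(a, b)\<close>; scalar multiplication adds the
  whole submodule back so that it maps cosets to cosets. The multiplicative fields of the
  record are irrelevant (and \<open>mult\<close> must be qualified, as HOL-Library's multiset relation
  \<open>mult\<close> is in scope).\<close>

definition rel_module :: "('a, 'c) ring_scheme \<Rightarrow> 'a \<Rightarrow> 'a \<Rightarrow> ('a, ('a \<times> 'a) set) module" where
  "rel_module R a b =
    \<lparr>carrier = {rel_coset R a b u v | u v. u \<in> carrier R \<and> v \<in> carrier R},
     Group.monoid.mult = undefined, one = undefined, zero = rel_coset R a b \<zero>\<^bsub>R\<^esub> \<zero>\<^bsub>R\<^esub>,
     add = (\<lambda>A B. {(fst p \<oplus>\<^bsub>R\<^esub> fst q, snd p \<oplus>\<^bsub>R\<^esub> snd q) | p q. p \<in> A \<and> q \<in> B}),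
     smult = (\<lambda>r A. {(r \<otimes>\<^bsub>R\<^esub> fst p \<oplus>\<^bsub>R\<^esub> t \<otimes>\<^bsub>R\<^esub> a, r \<otimes>\<^bsub>R\<^esub> snd p \<oplus>\<^bsub>R\<^esub> t \<otimes>\<^bsub>R\<^esub> b)
                      | p t. p \<in> A \<and> t \<in> carrier R})\<rparr>"

locale one_relation = ring +
  fixes a b
  assumes a_carrier: "a \<in> carrier R" and b_carrier: "b \<in> carrier R"
begin

abbreviation coset where "coset \<equiv> rel_coset R a b"
abbreviation Q where "Q \<equiv> rel_module R a b"

lemma mem_coset_iff: "p \<in> coset u v \<longleftrightarrow> (\<exists>t\<in>carrier R. p = (u \<oplus> t \<otimes> a, v \<oplus> t \<otimes> b))"
  by (auto simp: rel_coset_def)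

lemma self_mem_coset: "u \<in> carrier R \<Longrightarrow> v \<in> carrier R \<Longrightarrow> (u, v) \<in> coset u v"
  unfolding mem_coset_iff using a_carrier b_carrier by (intro bexI[of _ \<zero>]) auto

lemma coset_shift:
  assumes "u \<in> carrier R" "v \<in> carrier R" "t \<in> carrier R"
  shows "coset (u \<oplus> t \<otimes> a) (v \<oplus> t \<otimes> b) = coset u v"
proof (intro equalityI subsetI)
  fix p assume "p \<in> coset (u \<oplus> t \<otimes> a) (v \<oplus> t \<otimes> b)"
  then obtain s where "s \<in> carrier R" "p = (u \<oplus> t \<otimes> a \<oplus> s \<otimes> a, v \<oplus> t \<otimes> b \<oplus> s \<otimes> b)"
    unfolding mem_coset_iff by blast
  moreover have "u \<oplus> t \<otimes> a \<oplus> s \<otimes> a = u \<oplus> (t \<oplus> s) \<otimes> a" "v \<oplus> t \<otimes> b \<oplus> s \<otimes> b = v \<oplus> (t \<oplus> s) \<otimes> b"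
    using assms a_carrier b_carrier \<open>s \<in> carrier R\<close> by algebra+
  ultimately show "p \<in> coset u v"
    unfolding mem_coset_iff using assms(3) by (intro bexI[of _ "t \<oplus> s"]) auto
next
  fix p assume "p \<in> coset u v"
  then obtain s where "s \<in> carrier R" "p = (u \<oplus> s \<otimes> a, v \<oplus> s \<otimes> b)"
    unfolding mem_coset_iff by blast
  moreover have "u \<oplus> s \<otimes> a = u \<oplus> t \<otimes> a \<oplus> (\<ominus> t \<oplus> s) \<otimes> a" "v \<oplus> s \<otimes> b = v \<oplus> t \<otimes> b \<oplus> (\<ominus> t \<oplus> s) \<otimes> b"
    using assms a_carrier b_carrier \<open>s \<in> carrier R\<close> by algebra+
  ultimately show "p \<in> coset (u \<oplus> t \<otimes> a) (v \<oplus> t \<otimes> b)"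
    unfolding mem_coset_iff using assms(3) by (intro bexI[of _ "\<ominus> t \<oplus> s"]) auto
qed

lemma coset_eq_iff:
  assumes "u \<in> carrier R" "v \<in> carrier R" "u' \<in> carrier R" "v' \<in> carrier R"
  shows "coset u v = coset u' v' \<longleftrightarrow> (\<exists>t\<in>carrier R. u = u' \<oplus> t \<otimes> a \<and> v = v' \<oplus> t \<otimes> b)"
proof
  assume "coset u v = coset u' v'"
  then have "(u, v) \<in> coset u' v'"
    using self_mem_coset assms by blast
  then show "\<exists>t\<in>carrier R. u = u' \<oplus> t \<otimes> a \<and> v = v' \<oplus> t \<otimes> b"
    unfolding mem_coset_iff by blast
qed (use coset_shift assms in auto)

lemma coset_eq_zero_iff:
  assumes "u \<in> carrier R" "v \<in> carrier R"
  shows "coset u v = \<zero>\<^bsub>Q\<^esub> \<longleftrightarrow> (\<exists>t\<in>carrier R. u = t \<otimes> a \<and> v = t \<otimes> b)"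
  using coset_eq_iff[OF assms zero_closed zero_closed] a_carrier b_carrier
  by (simp add: rel_module_def)

lemma coset_eq_zero: "coset a b = \<zero>\<^bsub>Q\<^esub>"
  using coset_eq_zero_iff[OF a_carrier b_carrier] a_carrier b_carrier
  by (auto intro: bexI[of _ \<one>])

lemma carrier_Q: "carrier Q = {coset u v | u v. u \<in> carrier R \<and> v \<in> carrier R}"
  by (simp add: rel_module_def)

lemma coset_in_carrier: "u \<in> carrier R \<Longrightarrow> v \<in> carrier R \<Longrightarrow> coset u v \<in> carrier Q"
  unfolding carrier_Q by blast

lemma carrier_QE:
  assumes "A \<in> carrier Q"
  obtains u v where "u \<in> carrier R" "v \<in> carrier R" "A = coset u v"
  using assms unfolding carrier_Q by blast

lemma mem_add_iff:
  "z \<in> A \<oplus>\<^bsub>Q\<^esub> B \<longleftrightarrow> (\<exists>p\<in>A. \<exists>q\<in>B. z = (fst p \<oplus> fst q, snd p \<oplus> snd q))"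
proof -
  have "A \<oplus>\<^bsub>Q\<^esub> B = {(fst p \<oplus> fst q, snd p \<oplus> snd q) | p q. p \<in> A \<and> q \<in> B}"
    by (simp add: rel_module_def)
  then show ?thesis by blast
qed

lemma mem_smult_iff:
  "z \<in> r \<odot>\<^bsub>Q\<^esub> A \<longleftrightarrow> (\<exists>p\<in>A. \<exists>t\<in>carrier R. z = (r \<otimes> fst p \<oplus> t \<otimes> a, r \<otimes> snd p \<oplus> t \<otimes> b))"
proof -
  have "r \<odot>\<^bsub>Q\<^esub> A = {(r \<otimes> fst p \<oplus> t \<otimes> a, r \<otimes> snd p \<oplus> t \<otimes> b) | p t. p \<in> A \<and> t \<in> carrier R}"
    by (simp add: rel_module_def)
  then show ?thesis by blast
qed

lemma add_coset:
  assumes "u \<in> carrier R" "v \<in> carrier R" "u' \<in> carrier R" "v' \<in> carrier R"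
  shows "coset u v \<oplus>\<^bsub>Q\<^esub> coset u' v' = coset (u \<oplus> u') (v \<oplus> v')"
proof (intro equalityI subsetI)
  fix z assume "z \<in> coset u v \<oplus>\<^bsub>Q\<^esub> coset u' v'"
  then obtain t t' where tt': "t \<in> carrier R" "t' \<in> carrier R"
    "z = (u \<oplus> t \<otimes> a \<oplus> (u' \<oplus> t' \<otimes> a), v \<oplus> t \<otimes> b \<oplus> (v' \<oplus> t' \<otimes> b))"
    by (auto simp: mem_add_iff mem_coset_iff)
  moreover have "u \<oplus> t \<otimes> a \<oplus> (u' \<oplus> t' \<otimes> a) = u \<oplus> u' \<oplus> (t \<oplus> t') \<otimes> a"
    "v \<oplus> t \<otimes> b \<oplus> (v' \<oplus> t' \<otimes> b) = v \<oplus> v' \<oplus> (t \<oplus> t') \<otimes> b"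
    using assms tt'(1,2) a_carrier b_carrier by algebra+
  ultimately show "z \<in> coset (u \<oplus> u') (v \<oplus> v')"
    unfolding mem_coset_iff by (intro bexI[of _ "t \<oplus> t'"]) auto
next
  fix z assume "z \<in> coset (u \<oplus> u') (v \<oplus> v')"
  then obtain t where t: "t \<in> carrier R" "z = (u \<oplus> u' \<oplus> t \<otimes> a, v \<oplus> v' \<oplus> t \<otimes> b)"
    unfolding mem_coset_iff by blast
  have "(u \<oplus> t \<otimes> a, v \<oplus> t \<otimes> b) \<in> coset u v"
    using t(1) unfolding mem_coset_iff by blast
  moreover have "(u', v') \<in> coset u' v'"
    using assms by (intro self_mem_coset)
  moreover have "u \<oplus> u' \<oplus> t \<otimes> a = u \<oplus> t \<otimes> a \<oplus> u'" "v \<oplus> v' \<oplus> t \<otimes> b = v \<oplus> t \<otimes> b \<oplus> v'"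
    using assms t(1) a_carrier b_carrier by algebra+
  ultimately show "z \<in> coset u v \<oplus>\<^bsub>Q\<^esub> coset u' v'"
    unfolding mem_add_iff using t(2) by force
qed

lemma smult_coset:
  assumes "r \<in> carrier R" "u \<in> carrier R" "v \<in> carrier R"
  shows "r \<odot>\<^bsub>Q\<^esub> coset u v = coset (r \<otimes> u) (r \<otimes> v)"
proof (intro equalityI subsetI)
  fix z assume "z \<in> r \<odot>\<^bsub>Q\<^esub> coset u v"
  then obtain t s where ts: "t \<in> carrier R" "s \<in> carrier R"
    "z = (r \<otimes> (u \<oplus> t \<otimes> a) \<oplus> s \<otimes> a, r \<otimes> (v \<oplus> t \<otimes> b) \<oplus> s \<otimes> b)"
    by (auto simp: mem_smult_iff mem_coset_iff)
  moreover have "r \<otimes> (u \<oplus> t \<otimes> a) \<oplus> s \<otimes> a = r \<otimes> u \<oplus> (r \<otimes> t \<oplus> s) \<otimes> a"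
    "r \<otimes> (v \<oplus> t \<otimes> b) \<oplus> s \<otimes> b = r \<otimes> v \<oplus> (r \<otimes> t \<oplus> s) \<otimes> b"
    using assms ts(1,2) a_carrier b_carrier by algebra+
  ultimately show "z \<in> coset (r \<otimes> u) (r \<otimes> v)"
    unfolding mem_coset_iff using assms(1) by (intro bexI[of _ "r \<otimes> t \<oplus> s"]) auto
next
  fix z assume "z \<in> coset (r \<otimes> u) (r \<otimes> v)"
  then obtain t where "t \<in> carrier R" "z = (r \<otimes> u \<oplus> t \<otimes> a, r \<otimes> v \<oplus> t \<otimes> b)"
    unfolding mem_coset_iff by blast
  then show "z \<in> r \<odot>\<^bsub>Q\<^esub> coset u v"
    using self_mem_coset[OF assms(2,3)] unfolding mem_smult_iff by force
qed

lemma zero_Q: "\<zero>\<^bsub>Q\<^esub> = coset \<zero> \<zero>"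
  by (simp add: rel_module_def)

lemma abelian_group_Q: "abelian_group Q"
proof (rule abelian_groupI)
  fix A B assume "A \<in> carrier Q" "B \<in> carrier Q"
  then show "A \<oplus>\<^bsub>Q\<^esub> B \<in> carrier Q"
    by (elim carrier_QE) (simp add: add_coset coset_in_carrier)
next
  show "\<zero>\<^bsub>Q\<^esub> \<in> carrier Q"
    unfolding zero_Q by (simp add: coset_in_carrier)
next
  fix A B C assume "A \<in> carrier Q" "B \<in> carrier Q" "C \<in> carrier Q"
  then show "A \<oplus>\<^bsub>Q\<^esub> B \<oplus>\<^bsub>Q\<^esub> C = A \<oplus>\<^bsub>Q\<^esub> (B \<oplus>\<^bsub>Q\<^esub> C)"
    by (elim carrier_QE) (simp add: add_coset a_assoc)
next
  fix A B assume "A \<in> carrier Q" "B \<in> carrier Q"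
  then show "A \<oplus>\<^bsub>Q\<^esub> B = B \<oplus>\<^bsub>Q\<^esub> A"
    by (elim carrier_QE) (simp add: add_coset a_comm)
next
  fix A assume "A \<in> carrier Q"
  then show "\<zero>\<^bsub>Q\<^esub> \<oplus>\<^bsub>Q\<^esub> A = A"
    unfolding zero_Q by (elim carrier_QE) (simp add: add_coset)
next
  fix A assume "A \<in> carrier Q"
  then obtain u v where uv: "u \<in> carrier R" "v \<in> carrier R" "A = coset u v"
    by (elim carrier_QE)
  then have "coset (\<ominus> u) (\<ominus> v) \<oplus>\<^bsub>Q\<^esub> A = \<zero>\<^bsub>Q\<^esub>"
    unfolding zero_Q by (simp add: add_coset l_neg)
  moreover have "coset (\<ominus> u) (\<ominus> v) \<in> carrier Q"
    using uv by (simp add: coset_in_carrier)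
  ultimately show "\<exists>B\<in>carrier Q. B \<oplus>\<^bsub>Q\<^esub> A = \<zero>\<^bsub>Q\<^esub>"
    by blast
qed

lemma left_mod_Q: "left_mod R Q"
proof (intro left_mod.intro left_mod_axioms.intro)
  show "ring R" by (rule ring_axioms)
  show "abelian_group Q" by (rule abelian_group_Q)
qed (auto elim!: carrier_QE
    simp: smult_coset add_coset coset_in_carrier l_distr r_distr m_assoc)

lemma coset_eq_lincomb_basis:
  assumes "u \<in> carrier R" "v \<in> carrier R"
  shows "coset u v = u \<odot>\<^bsub>Q\<^esub> coset \<one> \<zero> \<oplus>\<^bsub>Q\<^esub> v \<odot>\<^bsub>Q\<^esub> coset \<zero> \<one>"
  using assms by (simp add: smult_coset add_coset)

lemma two_generated_Q: "two_generated R Q"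
proof -
  let ?e1 = "coset \<one> \<zero>" and ?e2 = "coset \<zero> \<one>"
  have "carrier Q = {r \<odot>\<^bsub>Q\<^esub> ?e1 \<oplus>\<^bsub>Q\<^esub> s \<odot>\<^bsub>Q\<^esub> ?e2 | r s. r \<in> carrier R \<and> s \<in> carrier R}"
  proof (intro equalityI subsetI)
    fix A assume "A \<in> carrier Q"
    then obtain u v where "u \<in> carrier R" "v \<in> carrier R" "A = coset u v"
      by (elim carrier_QE)
    then show "A \<in> {r \<odot>\<^bsub>Q\<^esub> ?e1 \<oplus>\<^bsub>Q\<^esub> s \<odot>\<^bsub>Q\<^esub> ?e2 | r s. r \<in> carrier R \<and> s \<in> carrier R}"
      using coset_eq_lincomb_basis[of u v] by blast
  next
    fix A assume "A \<in> {r \<odot>\<^bsub>Q\<^esub> ?e1 \<oplus>\<^bsub>Q\<^esub> s \<odot>\<^bsub>Q\<^esub> ?e2 | r s. r \<in> carrier R \<and> s \<in> carrier R}"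
    then obtain r s where "r \<in> carrier R" "s \<in> carrier R" "A = r \<odot>\<^bsub>Q\<^esub> ?e1 \<oplus>\<^bsub>Q\<^esub> s \<odot>\<^bsub>Q\<^esub> ?e2"
      by blast
    then show "A \<in> carrier Q"
      by (simp add: coset_eq_lincomb_basis[symmetric] coset_in_carrier)
  qed
  moreover have "?e1 \<in> carrier Q" "?e2 \<in> carrier Q"
    by (simp_all add: coset_in_carrier)
  ultimately show ?thesis
    unfolding two_generated_def by blast
qed

end

locale local_one_relation = left_local_ring + one_relation
begin

text \<open>The cosets with first coordinate in \<open>Max\<close> form a submodule, which does not contain
  \<open>coset \<one> \<zero>\<close> because \<open>a \<in> Max\<close>; so some generator lies outside it.\<close>

lemma generator_with_unit_coordinate:
  assumes "a \<in> Max" and "cyclic_decomposition R Q n x"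
    and \<alpha>: "\<forall>i<n. \<alpha> i \<in> carrier R" "coset \<one> \<zero> = lincomb Q \<alpha> x n"
  obtains i u v where "i < n" "u \<in> Units R" "v \<in> carrier R" "x i = coset u v"
proof -
  interpret cyclic_decomposition R Q n x by fact
  let ?N = "{coset u v | u v. u \<in> Max \<and> v \<in> carrier R}"
  have N_carrier: "?N \<subseteq> carrier Q"
  proof
    fix A assume "A \<in> ?N"
    then obtain u v where "u \<in> Max" "v \<in> carrier R" "A = coset u v"
      by blast
    then show "A \<in> carrier Q"
      using Max_carrier coset_in_carrier by simp
  qed
  have N_zero: "\<zero>\<^bsub>Q\<^esub> \<in> ?N"
    unfolding zero_Q using Max_zero by blast
  have N_add: "A \<oplus>\<^bsub>Q\<^esub> B \<in> ?N" if "A \<in> ?N" "B \<in> ?N" for A B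
    using that Max_carrier Max_add by (fastforce simp: add_coset)
  have N_smult: "r \<odot>\<^bsub>Q\<^esub> A \<in> ?N" if "r \<in> carrier R" "A \<in> ?N" for r A
    using that Max_carrier Max_lmult by (fastforce simp: smult_coset)
  have "\<not> (\<forall>i<n. x i \<in> ?N)"
  proof
    assume "\<forall>i<n. x i \<in> ?N"
    with N_zero N_add N_smult N_carrier \<alpha>(1) have "lincomb Q \<alpha> x n \<in> ?N"
      by (rule lincomb_mem)
    then obtain u v where uv: "u \<in> Max" "v \<in> carrier R" "coset \<one> \<zero> = coset u v"
      using \<alpha>(2) by auto
    then obtain t where "t \<in> carrier R" "\<one> = u \<oplus> t \<otimes> a"
      using coset_eq_iff[of \<one> \<zero> u v] Max_carrier by auto
    then have "\<one> \<in> Max"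
      using Max_add[OF uv(1) Max_lmult[OF _ assms(1)]] by simp
    then show False
      using one_notin_Max by contradiction
  qed
  then obtain i where i: "i < n" "x i \<notin> ?N"
    by blast
  moreover obtain u v where uv: "u \<in> carrier R" "v \<in> carrier R" "x i = coset u v"
    using generators_closed i(1) carrier_QE by blast
  moreover have "u \<notin> Max"
    using i(2) uv by blast
  ultimately show thesis
    using that Units_if_notin_Max by blast
qed

lemma divides_dichotomy_if_annihilators:
  assumes u: "u \<in> Units R" and carr: "v \<in> carrier R" "\<alpha> \<in> carrier R" "\<beta> \<in> carrier R"
    and rel: "(a \<otimes> \<alpha> \<oplus> b \<otimes> \<beta>) \<odot>\<^bsub>Q\<^esub> coset u v = \<zero>\<^bsub>Q\<^esub>"
    and fixed: "(u \<otimes> \<alpha> \<oplus> v \<otimes> \<beta>) \<odot>\<^bsub>Q\<^esub> coset u v = coset u v"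
  shows "b divides a \<or> a divides b"
proof -
  interpret Q: left_mod R Q by (rule left_mod_Q)
  have uR: "u \<in> carrier R" "inv u \<in> carrier R" and inv_u: "inv u \<otimes> u = \<one>"
    using u by auto
  note ab = a_carrier b_carrier
  define p where "p = a \<otimes> \<alpha> \<oplus> b \<otimes> \<beta>"
  define q where "q = u \<otimes> \<alpha> \<oplus> v \<otimes> \<beta>"
  \<comment> \<open>\<open>p\<close> and \<open>\<one> \<ominus> q\<close> annihilate \<open>coset u v\<close>; the combination \<open>d\<close> is chosen so that the
    \<open>\<alpha>\<close>-terms cancel in \<open>d \<otimes> u\<close>\<close>
  define d where "d = p \<oplus> (a \<otimes> inv u) \<otimes> (\<one> \<ominus> q)"
  have pq: "p \<in> carrier R" "q \<in> carrier R" and dR: "d \<in> carrier R"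
    unfolding p_def q_def d_def using ab uR carr by auto
  have c: "coset u v \<in> carrier Q"
    using uR(1) carr(1) by (rule coset_in_carrier)
  have "d \<odot>\<^bsub>Q\<^esub> coset u v = (a \<otimes> inv u) \<odot>\<^bsub>Q\<^esub> ((\<one> \<ominus> q) \<odot>\<^bsub>Q\<^esub> coset u v)"
    unfolding d_def using rel pq ab uR c by (simp add: Q.smult_l_distr Q.smult_assoc1 p_def)
  also have "\<dots> = \<zero>\<^bsub>Q\<^esub>"
    using Q.smult_eq_zero_if_fixed[OF pq(2) c] fixed ab uR by (simp add: q_def)
  finally have "coset (d \<otimes> u) (d \<otimes> v) = \<zero>\<^bsub>Q\<^esub>"
    using dR uR carr by (simp add: smult_coset)
  then obtain r where r: "r \<in> carrier R" "d \<otimes> u = r \<otimes> a" "d \<otimes> v = r \<otimes> b"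
    using coset_eq_zero_iff dR uR carr by auto
  define w where "w = inv u \<otimes> v"
  have wR: "w \<in> carrier R"
    unfolding w_def using uR carr by simp
  have "d \<otimes> u = a \<otimes> (inv u \<otimes> u) \<oplus> (b \<ominus> a \<otimes> w) \<otimes> (\<beta> \<otimes> u)
      \<oplus> (a \<otimes> \<alpha> \<otimes> u \<ominus> a \<otimes> (inv u \<otimes> u) \<otimes> \<alpha> \<otimes> u)"
    unfolding d_def p_def q_def w_def using ab uR carr by algebra
  also have "\<dots> = a \<oplus> (b \<ominus> a \<otimes> w) \<otimes> (\<beta> \<otimes> u)"
    unfolding inv_u using ab uR carr wR by (simp add: minus_eq r_neg)
  finally have du: "d \<otimes> u = a \<oplus> (b \<ominus> a \<otimes> w) \<otimes> (\<beta> \<otimes> u)" .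
  have "r \<otimes> a \<otimes> w = d \<otimes> (u \<otimes> inv u) \<otimes> v"
    unfolding w_def r(2)[symmetric] using dR uR carr by (simp add: m_assoc)
  also have "\<dots> = r \<otimes> b"
    using u dR r(3) by simp
  finally show ?thesis
    using r du ab uR carr
    by (intro divides_dichotomy[of a b r w "\<beta> \<otimes> u"]) (auto simp: w_def)
qed

lemma divides_dichotomy_if_direct_sum_of_cyclics:
  assumes "a \<in> Max" "b \<in> Max" "direct_sum_of_cyclics R Q"
  shows "b divides a \<or> a divides b"
proof -
  interpret Q: left_mod R Q by (rule left_mod_Q)
  obtain n x where dec: "cyclic_decomposition R Q n x"
    using assms(3) by (rule Q.direct_sum_of_cyclicsE)
  interpret cyclic_decomposition R Q n x by (fact dec)
  obtain \<alpha> where \<alpha>: "\<forall>i<n. \<alpha> i \<in> carrier R" "coset \<one> \<zero> = lincomb Q \<alpha> x n"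
    using spanning coset_in_carrier[of \<one> \<zero>] by auto
  obtain \<beta> where \<beta>: "\<forall>i<n. \<beta> i \<in> carrier R" "coset \<zero> \<one> = lincomb Q \<beta> x n"
    using spanning coset_in_carrier[of \<zero> \<one>] by auto
  obtain i u v where i: "i < n" "u \<in> Units R" "v \<in> carrier R" "x i = coset u v"
    using generator_with_unit_coordinate[OF assms(1) dec \<alpha>] .
  have coords: "lincomb Q (\<lambda>j. s \<otimes> \<alpha> j \<oplus> t \<otimes> \<beta> j) x n = coset s t"
    if "s \<in> carrier R" "t \<in> carrier R" for s t
  proof -
    have "lincomb Q (\<lambda>j. s \<otimes> \<alpha> j \<oplus> t \<otimes> \<beta> j) x n
        = s \<odot>\<^bsub>Q\<^esub> lincomb Q \<alpha> x n \<oplus>\<^bsub>Q\<^esub> t \<odot>\<^bsub>Q\<^esub> lincomb Q \<beta> x n"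
      using that \<alpha>(1) \<beta>(1) generators_closed by (rule Q.lincomb_linear[symmetric])
    also have "\<dots> = coset s t"
      unfolding \<alpha>(2)[symmetric] \<beta>(2)[symmetric] using that by (rule coset_eq_lincomb_basis[symmetric])
    finally show ?thesis .
  qed
  have "(a \<otimes> \<alpha> i \<oplus> b \<otimes> \<beta> i) \<odot>\<^bsub>Q\<^esub> x i = \<zero>\<^bsub>Q\<^esub>"
    using independent[rule_format, of "\<lambda>j. a \<otimes> \<alpha> j \<oplus> b \<otimes> \<beta> j"]
      coords[OF a_carrier b_carrier] coset_eq_zero \<alpha>(1) \<beta>(1) i(1) a_carrier b_carrier
    by auto
  moreover have "(u \<otimes> \<alpha> i \<oplus> v \<otimes> \<beta> i) \<odot>\<^bsub>Q\<^esub> x i = x i"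
    using coords[of u v] i \<alpha>(1) \<beta>(1) by (intro summand_eq_if_lincomb_eq_generator) auto
  ultimately show ?thesis
    using i \<alpha>(1) \<beta>(1) by (intro divides_dichotomy_if_annihilators[of u v "\<alpha> i" "\<beta> i"]) auto
qed

end

theorem theorem2p4:
  fixes R :: "'a ring" and Max :: "'a set"
  assumes "local_ring R"
    and "maximal_left_ideal R Max"
    and "fg_left_ideal R Max"
    and "fg_right_ideal R Max"
    and "\<forall>M :: ('a, ('a \<times> 'a) set) module.
           left_module R M \<and> two_generated R M \<longrightarrow> direct_sum_of_cyclics R M"
  shows "principal_left_ideal R Max \<or> principal_right_ideal R Max"
proof -
  interpret left_local_ring R Max
    using assms(1,2) by (rule local_ring_imp_left_local_ring)
  have "x divides\<^bsub>R\<^esub> y \<or> y divides\<^bsub>R\<^esub> x" if "x \<in> Max" "y \<in> Max" for x y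
  proof -
    interpret local_one_relation R Max x y
      by unfold_locales (use that Max_carrier in auto)
    have "direct_sum_of_cyclics R (rel_module R x y)"
      using assms(5) left_mod_Q two_generated_Q left_module_iff_left_mod by blast
    then show ?thesis
      using divides_dichotomy_if_direct_sum_of_cyclics that by auto
  qed
  then have "principal_right_ideal R Max"
    using assms(4) by (intro principal_right_ideal_if_divides_chain) auto
  then show ?thesis ..
qed

end
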